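(* Let $n\in\mathbb{N}_0\cup\{\infty\}$. If $n=0$, let $U=X$ be a topological space; if $n\ge 1$, let $X$ be a locally convex space over $\mathbb{K}$ and $U\subseteq X$ an open subset. Let $E_1,E_2,F$ be locally convex spaces, $\beta\colon E_1\times E_2\to F$ a bilinear map and $f\colon U\to E_1\times E_2$ a $C^n_{\mathbb{K}}$-map (for $n=0$: a continuous map). Assume that at least one of the following holds: (a) $X$ is metrizable and $\beta$ is sequentially continuous; or (b) $X$ is a $k^\infty$-space and $\beta$ is hypocontinuous in the second argument with respect to a set $\mathcal{S}$ of bounded subsets of $E_2$ which contains all compact subsets of $E_2$. Then $\beta\circ f\colon U\to F$ is $C^n_{\mathbb{K}}$.
   Context: $\mathbb{K}\in\{\mathbb{R},\mathbb{C}\}$; spaces serving as domain or range of differentiable maps are Hausdorff. Keller's $C^n$-maps: for $U\subseteq E$ open, $f\colon U\to F$ is $C^0_{\mathbb{K}}$ if continuous; $C^1_{\mathbb{K}}$ if continuous, the limit $df(x,y)=\lim_{t\to0}\frac{f(x+ty)-f(x)}{t}$ ($0\ne t\in\mathbb{K}$) exists for all $x\in U$, $y\in E$, and $df\colon U\times E\to F$ is continuous; $C^{n+1}_{\mathbb{K}}$ if $C^1_{\mathbb{K}}$ and $df$ is $C^n_{\mathbb{K}}$; $C^\infty_{\mathbb{K}}$ if $C^n_{\mathbb{K}}$ for all $n$. A Hausdorff space $X$ is a $k$-space if a subset $A\subseteq X$ is closed whenever $A\cap K$ is closed in $K$ for all compact $K\subseteq X$; $X$ is a $k^\infty$-space if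 it is Hausdorff and $X^n$ is a $k$-space for every $n\in\mathbb{N}$. A bilinear $\beta$ is hypocontinuous in the second argument with respect to $\mathcal{S}$ if it is separately continuous and for each $M\in\mathcal{S}$ and $0$-neighbourhood $W\subseteq F$ there is a $0$-neighbourhood $V\subseteq E_1$ with $\beta(V\times M)\subseteq W$. *)

theory Defs
  imports "HOL-Analysis.Analysis"
begin

(* The scalar field K is modelled by a type 'k :: real_normed_field (R or C);
   a K-vector space structure on a type 'a :: ab_group_add is given by an explicit
   scalar multiplication 's :: 'k \<Rightarrow> 'a \<Rightarrow> 'a', the topology is the
   type-class topology. *)

definition convex_K :: "('k::real_normed_field \<Rightarrow> 'a::ab_group_add \<Rightarrow> 'a) \<Rightarrow> 'a set \<Rightarrow> bool" where
  "convex_K s V \<longleftrightarrow>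
     (\<forall>x\<in>V. \<forall>y\<in>V. \<forall>t::real. 0 \<le> t \<and> t \<le> 1 \<longrightarrow> s (of_real t) x + s (of_real (1 - t)) y \<in> V)"

definition lcs :: "('k::real_normed_field \<Rightarrow> 'a::{ab_group_add,t2_space} \<Rightarrow> 'a) \<Rightarrow> bool" where
  "lcs s \<longleftrightarrow> vector_space s
     \<and> continuous_on UNIV (\<lambda>(x::'a, y::'a). x + y)
     \<and> continuous_on UNIV (\<lambda>(c::'k, x::'a). s c x)
     \<and> (\<forall>W. open W \<and> (0::'a) \<in> W \<longrightarrow> (\<exists>V. open V \<and> 0 \<in> V \<and> V \<subseteq> W \<and> convex_K s V))"

definition bounded_K :: "('k::real_normed_field \<Rightarrow> 'a::{ab_group_add,topological_space} \<Rightarrow> 'a) \<Rightarrow> 'a set \<Rightarrow> bool" where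
  "bounded_K s M \<longleftrightarrow>
     (\<forall>W. open W \<and> (0::'a) \<in> W \<longrightarrow> (\<exists>r>0. \<forall>t::'k. norm t \<ge> r \<longrightarrow> M \<subseteq> s t ` W))"

definition bilinear_K ::
  "('k::real_normed_field \<Rightarrow> 'e1::ab_group_add \<Rightarrow> 'e1) \<Rightarrow> ('k \<Rightarrow> 'e2::ab_group_add \<Rightarrow> 'e2)
     \<Rightarrow> ('k \<Rightarrow> 'f::ab_group_add \<Rightarrow> 'f) \<Rightarrow> ('e1 \<Rightarrow> 'e2 \<Rightarrow> 'f) \<Rightarrow> bool" where
  "bilinear_K s1 s2 sF \<beta> \<longleftrightarrow>
     (\<forall>b. Vector_Spaces.linear s1 sF (\<lambda>a. \<beta> a b)) \<and> (\<forall>a. Vector_Spaces.linear s2 sF (\<beta> a))"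

definition seq_continuous2 :: "('e1::topological_space \<Rightarrow> 'e2::topological_space \<Rightarrow> 'f::topological_space) \<Rightarrow> bool" where
  "seq_continuous2 \<beta> \<longleftrightarrow>
     (\<forall>(z::nat \<Rightarrow> 'e1 \<times> 'e2) p. z \<longlonglongrightarrow> p \<longrightarrow>
        (\<lambda>k. \<beta> (fst (z k)) (snd (z k))) \<longlonglongrightarrow> \<beta> (fst p) (snd p))"

definition hypocontinuous2 ::
  "('e1::{zero,topological_space} \<Rightarrow> 'e2::topological_space \<Rightarrow> 'f::{zero,topological_space}) \<Rightarrow> 'e2 set set \<Rightarrow> bool" where
  "hypocontinuous2 \<beta> S \<longleftrightarrow>
     (\<forall>b. continuous_on UNIV (\<lambda>a. \<beta> a b)) \<and> (\<forall>a. continuous_on UNIV (\<beta> a))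
     \<and> (\<forall>M\<in>S. \<forall>W. open W \<and> (0::'f) \<in> W \<longrightarrow>
            (\<exists>V. open V \<and> (0::'e1) \<in> V \<and> (\<forall>a\<in>V. \<forall>b\<in>M. \<beta> a b \<in> W)))"

definition k_inf_space :: "'a topology \<Rightarrow> bool" where
  "k_inf_space X \<longleftrightarrow> Hausdorff_space X
     \<and> (\<forall>n::nat. k_space (product_topology (\<lambda>i. X) {..<n}))"

(* Since the recursive definition changes the domain
   (f on U \<subseteq> X, df on U \<times> X, d(df) on (U \<times> X) \<times> (X \<times> X), ...), all
   domains are represented inside the finite powers X^m, realised as
   extensional functions nat \<Rightarrow> 'x on {..<m} with the product topology;
   a pair (p,q) \<in> X^m \<times> X^m is identified with its concatenation in X^(2m).
   ------------------------------------------------------------------------ *)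

definition Xpow :: "nat \<Rightarrow> (nat \<Rightarrow> 'x::topological_space) topology" where
  "Xpow m = product_topology (\<lambda>i. euclidean) {..<m}"

definition padd :: "nat \<Rightarrow> (nat \<Rightarrow> 'x::plus) \<Rightarrow> (nat \<Rightarrow> 'x) \<Rightarrow> (nat \<Rightarrow> 'x)" where
  "padd m p q = restrict (\<lambda>i. p i + q i) {..<m}"

definition pscale :: "('k \<Rightarrow> 'x \<Rightarrow> 'x) \<Rightarrow> nat \<Rightarrow> 'k \<Rightarrow> (nat \<Rightarrow> 'x) \<Rightarrow> (nat \<Rightarrow> 'x)" where
  "pscale sX m t q = restrict (\<lambda>i. sX t (q i)) {..<m}"

definition fst_part :: "nat \<Rightarrow> (nat \<Rightarrow> 'x) \<Rightarrow> (nat \<Rightarrow> 'x)" where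
  "fst_part m r = restrict r {..<m}"

definition snd_part :: "nat \<Rightarrow> (nat \<Rightarrow> 'x) \<Rightarrow> (nat \<Rightarrow> 'x)" where
  "snd_part m r = restrict (\<lambda>i. r (i + m)) {..<m}"

definition dom_d :: "nat \<Rightarrow> (nat \<Rightarrow> 'x::topological_space) set \<Rightarrow> (nat \<Rightarrow> 'x) set" where
  "dom_d m V = {r \<in> topspace (Xpow (2 * m)). fst_part m r \<in> V}"

definition diffq ::
  "('k::real_normed_field \<Rightarrow> 'x::plus \<Rightarrow> 'x) \<Rightarrow> ('k \<Rightarrow> 'f::minus \<Rightarrow> 'f) \<Rightarrow> nat
     \<Rightarrow> ((nat \<Rightarrow> 'x) \<Rightarrow> 'f) \<Rightarrow> (nat \<Rightarrow> 'x) \<Rightarrow> (nat \<Rightarrow> 'x) \<Rightarrow> 'k \<Rightarrow> 'f" where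
  "diffq sX sF m g p q t = sF (inverse t) (g (padd m p (pscale sX m t q)) - g p)"

definition dd ::
  "('k::real_normed_field \<Rightarrow> 'x::plus \<Rightarrow> 'x) \<Rightarrow> ('k \<Rightarrow> 'f::{minus,t2_space} \<Rightarrow> 'f) \<Rightarrow> nat
     \<Rightarrow> ((nat \<Rightarrow> 'x) \<Rightarrow> 'f) \<Rightarrow> (nat \<Rightarrow> 'x) \<Rightarrow> 'f" where
  "dd sX sF m g r = Lim (at 0) (diffq sX sF m g (fst_part m r) (snd_part m r))"

definition C1_K ::
  "('k::real_normed_field \<Rightarrow> 'x::{ab_group_add,topological_space} \<Rightarrow> 'x) \<Rightarrow> ('k \<Rightarrow> 'f::{ab_group_add,t2_space} \<Rightarrow> 'f)
     \<Rightarrow> nat \<Rightarrow> (nat \<Rightarrow> 'x) set \<Rightarrow> ((nat \<Rightarrow> 'x) \<Rightarrow> 'f) \<Rightarrow> bool" where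
  "C1_K sX sF m V g \<longleftrightarrow>
     continuous_map (subtopology (Xpow m) V) euclidean g
     \<and> (\<forall>p\<in>V. \<forall>q\<in>topspace (Xpow m). \<exists>l. (diffq sX sF m g p q \<longlongrightarrow> l) (at 0))
     \<and> continuous_map (subtopology (Xpow (2 * m)) (dom_d m V)) euclidean (dd sX sF m g)"

fun Cnat_K ::
  "('k::real_normed_field \<Rightarrow> 'x::{ab_group_add,topological_space} \<Rightarrow> 'x) \<Rightarrow> ('k \<Rightarrow> 'f::{ab_group_add,t2_space} \<Rightarrow> 'f)
     \<Rightarrow> nat \<Rightarrow> nat \<Rightarrow> (nat \<Rightarrow> 'x) set \<Rightarrow> ((nat \<Rightarrow> 'x) \<Rightarrow> 'f) \<Rightarrow> bool" where
  "Cnat_K sX sF 0 m V g = continuous_map (subtopology (Xpow m) V) euclidean g"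
| "Cnat_K sX sF (Suc k) m V g =
     (C1_K sX sF m V g \<and> Cnat_K sX sF k (2 * m) (dom_d m V) (dd sX sF m g))"

definition emb1 :: "'x set \<Rightarrow> (nat \<Rightarrow> 'x) set" where
  "emb1 U = {p \<in> PiE {..<1} (\<lambda>_. UNIV). p 0 \<in> U}"

definition Cn_K ::
  "('k::real_normed_field \<Rightarrow> 'x::{ab_group_add,topological_space} \<Rightarrow> 'x) \<Rightarrow> ('k \<Rightarrow> 'f::{ab_group_add,t2_space} \<Rightarrow> 'f)
     \<Rightarrow> enat \<Rightarrow> 'x set \<Rightarrow> ('x \<Rightarrow> 'f) \<Rightarrow> bool" where
  "Cn_K sX sF n U f \<longleftrightarrow> open U \<and>
     (case n of enat k \<Rightarrow> Cnat_K sX sF k 1 (emb1 U) (\<lambda>p. f (p 0))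
              | \<infinity> \<Rightarrow> (\<forall>k. Cnat_K sX sF k 1 (emb1 U) (\<lambda>p. f (p 0))))"

definition prod_scale :: "('k \<Rightarrow> 'a \<Rightarrow> 'a) \<Rightarrow> ('k \<Rightarrow> 'b \<Rightarrow> 'b) \<Rightarrow> 'k \<Rightarrow> 'a \<times> 'b \<Rightarrow> 'a \<times> 'b" where
  "prod_scale s1 s2 c z = (s1 c (fst z), s2 c (snd z))"

end

theory Submission
  imports Defs
begin

(* One shows by induction on k that beta(h1, h2) is C^k whenever h1 and h2 are, the derivative
   being given by the product rule
     d(beta(h1, h2))(p, q) = beta(dh1(p, q), h2 p) + beta(h1 p, dh2(p, q)),
   whose two summands are again of the form beta(C^(k-1), C^(k-1)) on the open set U x X^m.
   The difference quotients converge because beta is sequentially continuous and the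
   parameter t ranges over the first countable field K.  Everything thus reduces to k = 0:
   beta(g1, g2) is continuous for continuous g1, g2 on open subsets of the powers of X.
   Under (a) these subsets are metrizable and sequential continuity suffices.  Under (b) they
   are k-spaces, and on a compact set C the map is continuous because g2(C) is compact, hence
   in S, and hypocontinuity makes beta jointly continuous on E1 x g2(C).  Hypocontinuity also
   yields sequential continuity, as a convergent sequence together with its limit is compact. *)

section \<open>Limits in locally convex spaces\<close>

lemma tendsto_continuous_binop:
  fixes op :: "'a::topological_space \<Rightarrow> 'b::topological_space \<Rightarrow> 'c::topological_space"
  assumes "continuous_on UNIV (\<lambda>(x, y). op x y)"
    and "(f \<longlongrightarrow> a) F" and "(g \<longlongrightarrow> b) F"
  shows "((\<lambda>i. op (f i) (g i)) \<longlongrightarrow> op a b) F"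
  using continuous_on_tendsto_compose[OF assms(1) tendsto_Pair[OF assms(2,3)]] by simp

lemma continuous_map_binop:
  assumes "continuous_on UNIV (\<lambda>(x, y). op x y)"
    and "continuous_map Y euclidean f" and "continuous_map Y euclidean g"
  shows "continuous_map Y euclidean (\<lambda>y. op (f y) (g y))"
  using continuous_map_compose[OF continuous_map_pairedI[OF assms(2,3)], of euclidean "\<lambda>(x, y). op x y"]
    assms(1)
  by (simp add: o_def)

lemma lcs_vector_space: "lcs s \<Longrightarrow> vector_space s"
  by (simp add: lcs_def)

lemma lcs_continuous_add:
  fixes s :: "'k::real_normed_field \<Rightarrow> 'a::{ab_group_add,t2_space} \<Rightarrow> 'a"
  shows "lcs s \<Longrightarrow> continuous_on UNIV (\<lambda>(x, y::'a). x + y)"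
  by (simp add: lcs_def)

lemma lcs_tendsto_add:
  fixes s :: "'k::real_normed_field \<Rightarrow> 'a::{ab_group_add,t2_space} \<Rightarrow> 'a"
    and f g :: "'b \<Rightarrow> 'a"
  assumes "lcs s" and "(f \<longlongrightarrow> a) F" and "(g \<longlongrightarrow> b) F"
  shows "((\<lambda>i. f i + g i) \<longlongrightarrow> a + b) F"
  using tendsto_continuous_binop[OF lcs_continuous_add[OF assms(1)] assms(2,3)] .

lemma lcs_tendsto_scale:
  assumes "lcs s" and "(c \<longlongrightarrow> c0) F" and "(f \<longlongrightarrow> a) F"
  shows "((\<lambda>i. s (c i) (f i)) \<longlongrightarrow> s c0 a) F"
  using assms by (intro tendsto_continuous_binop[of "\<lambda>c x. s c x"]) (simp_all add: lcs_def)

lemma lcs_tendsto_diff: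
  fixes s :: "'k::real_normed_field \<Rightarrow> 'a::{ab_group_add,t2_space} \<Rightarrow> 'a"
    and f g :: "'b \<Rightarrow> 'a"
  assumes "lcs s" and "(f \<longlongrightarrow> a) F" and "(g \<longlongrightarrow> b) F"
  shows "((\<lambda>i. f i - g i) \<longlongrightarrow> a - b) F"
proof -
  interpret vector_space s using lcs_vector_space[OF assms(1)] .
  have "((\<lambda>i. f i + s (-1) (g i)) \<longlongrightarrow> a + s (-1) b) F"
    by (intro lcs_tendsto_add[OF assms(1)] lcs_tendsto_scale[OF assms(1)] assms(2,3) tendsto_const)
  then show ?thesis
    by simp
qed

section \<open>Finite powers of a space\<close>

lemma topspace_Xpow: "topspace (Xpow m) = PiE {..<m} (\<lambda>_. UNIV)"
  by (simp add: Xpow_def)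

definition reindex :: "nat \<Rightarrow> (nat \<Rightarrow> nat) \<Rightarrow> (nat \<Rightarrow> 'x) \<Rightarrow> (nat \<Rightarrow> 'x)" where
  "reindex m \<sigma> r = restrict (\<lambda>i. r (\<sigma> i)) {..<m}"

lemma reindex_in_topspace: "reindex m \<sigma> r \<in> topspace (Xpow m)"
  by (simp add: topspace_Xpow reindex_def)

lemma fst_part_eq_reindex: "fst_part m = reindex m (\<lambda>i. i)"
  by (simp add: fun_eq_iff fst_part_def reindex_def)

lemma snd_part_eq_reindex: "snd_part m = reindex m (\<lambda>i. i + m)"
  by (simp add: fun_eq_iff snd_part_def reindex_def)

lemma continuous_map_reindex:
  assumes "\<And>i. i < m \<Longrightarrow> \<sigma> i < m'"
  shows "continuous_map (Xpow m') (Xpow m) (reindex m \<sigma> :: (nat \<Rightarrow> 'x::topological_space) \<Rightarrow> _)"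
  unfolding Xpow_def
proof (subst continuous_map_componentwise, intro conjI ballI)
  show "reindex m \<sigma> ` topspace (product_topology (\<lambda>i. euclidean) {..<m'}) \<subseteq> extensional {..<m}"
    by (auto simp: reindex_def)
  fix k assume k: "k \<in> {..<m}"
  then have "(\<lambda>x::nat \<Rightarrow> 'x. reindex m \<sigma> x k) = (\<lambda>x. x (\<sigma> k))"
    by (auto simp: reindex_def)
  then show "continuous_map (product_topology (\<lambda>i. euclidean) {..<m'}) euclidean
      (\<lambda>x::nat \<Rightarrow> 'x. reindex m \<sigma> x k)"
    using assms k by (auto intro: continuous_map_product_projection)
qed

lemma continuous_map_reindex_subtopology:
  assumes "\<And>i. i < m \<Longrightarrow> \<sigma> i < m'" and "reindex m \<sigma> ` W \<subseteq> V"
  shows "continuous_map (subtopology (Xpow m') W) (subtopology (Xpow m) V)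
    (reindex m \<sigma> :: (nat \<Rightarrow> 'x::topological_space) \<Rightarrow> _)"
  using assms
  by (intro continuous_map_into_subtopology continuous_map_from_subtopology continuous_map_reindex) auto

lemma openin_dom_d:
  assumes "openin (Xpow m) V"
  shows "openin (Xpow (2 * m)) (dom_d m V :: (nat \<Rightarrow> 'x::topological_space) set)"
proof -
  have "continuous_map (Xpow (2 * m)) (Xpow m) (fst_part m :: (nat \<Rightarrow> 'x) \<Rightarrow> _)"
    unfolding fst_part_eq_reindex by (rule continuous_map_reindex) simp
  from openin_continuous_map_preimage[OF this assms] show ?thesis
    by (simp add: dom_d_def)
qed

lemma dom_d_split:
  assumes "p \<in> V" and "V \<subseteq> topspace (Xpow m)" and "q \<in> topspace (Xpow m)"
  obtains r where "r \<in> dom_d m V" and "fst_part m r = p" and "snd_part m r = q"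
proof
  let ?r = "restrict (\<lambda>i. if i < m then p i else q (i - m)) {..<2 * m}"
  have p: "p \<in> PiE {..<m} (\<lambda>_. UNIV)" and q: "q \<in> PiE {..<m} (\<lambda>_. UNIV)"
    using assms by (auto simp: topspace_Xpow)
  then show "fst_part m ?r = p" and "snd_part m ?r = q"
    by (auto simp: fun_eq_iff fst_part_def snd_part_def PiE_def extensional_def)
  with assms(1) show "?r \<in> dom_d m V"
    by (simp add: dom_d_def topspace_Xpow)
qed

lemma limitin_padd_pscale:
  fixes sX :: "'k::real_normed_field \<Rightarrow> 'x::{ab_group_add,t2_space} \<Rightarrow> 'x"
  assumes X: "lcs sX" and p: "p \<in> topspace (Xpow m)" and q: "q \<in> topspace (Xpow m)"
  shows "limitin (Xpow m) (\<lambda>t. padd m p (pscale sX m t q)) p (at 0)"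
proof -
  interpret vector_space sX using lcs_vector_space[OF X] .
  have "((\<lambda>t. p i + sX t (q i)) \<longlongrightarrow> p i + sX 0 (q i)) (at 0)" for i
    by (intro lcs_tendsto_add[OF X] lcs_tendsto_scale[OF X] tendsto_const tendsto_ident_at)
  then have "((\<lambda>t. p i + sX t (q i)) \<longlongrightarrow> p i) (at 0)" for i
    by simp
  with p q show ?thesis
    unfolding Xpow_def by (subst limitin_componentwise) (auto simp: padd_def pscale_def PiE_def)
qed

lemma eventually_padd_pscale_in:
  fixes sX :: "'k::real_normed_field \<Rightarrow> 'x::{ab_group_add,t2_space} \<Rightarrow> 'x"
  assumes "lcs sX" and V: "openin (Xpow m) V" and "p \<in> V" and "q \<in> topspace (Xpow m)"
  shows "\<forall>\<^sub>F t in at 0. padd m p (pscale sX m t q) \<in> V"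
  using limitin_padd_pscale[OF assms(1) openin_subset[OF V, THEN subsetD] assms(4)] assms(2,3)
  by (simp add: limitin_def)

lemma metrizable_space_Xpow:
  assumes "metrizable_space (euclidean :: 'x::topological_space topology)"
  shows "metrizable_space (Xpow m :: (nat \<Rightarrow> 'x) topology)"
  unfolding Xpow_def metrizable_space_product_topology
  using assms by (auto intro: countable_finite)

lemma k_space_openin_Xpow:
  assumes "k_inf_space (euclidean :: 'x::topological_space topology)" and "openin (Xpow m) V"
  shows "k_space (subtopology (Xpow m :: (nat \<Rightarrow> 'x) topology) V)"
proof (rule k_space_open_subtopology)
  show "k_space (Xpow m :: (nat \<Rightarrow> 'x) topology)"
    using assms(1) by (simp add: k_inf_space_def Xpow_def)
  show "kc_space (Xpow m) \<or> Hausdorff_space (Xpow m :: (nat \<Rightarrow> 'x) topology)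
      \<or> regular_space (Xpow m :: (nat \<Rightarrow> 'x) topology)"
    using assms(1) by (simp add: k_inf_space_def Xpow_def Hausdorff_space_product_topology)
qed fact

lemma k_inf_space_imp_k_space:
  assumes "k_inf_space X"
  shows "k_space X"
proof -
  have "{..<1::nat} = {0}"
    by auto
  with assms have "k_space (product_topology (\<lambda>i. X) {0::nat})"
    unfolding k_inf_space_def by metis
  then show ?thesis
    using homeomorphic_k_space[OF homeomorphic_space_singleton_product[of "\<lambda>i::nat. X" 0]] by simp
qed

lemma openin_emb1:
  assumes "open U"
  shows "openin (Xpow 1) (emb1 U :: (nat \<Rightarrow> 'x::topological_space) set)"
proof -
  have "continuous_map (Xpow 1) euclidean (\<lambda>p::nat \<Rightarrow> 'x. p 0)"
    unfolding Xpow_def by (rule continuous_map_product_projection) simp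
  from openin_continuous_map_preimage[OF this] assms
  show ?thesis
    by (simp add: emb1_def topspace_Xpow)
qed

section \<open>Maps of class \<open>C\<^sup>k\<close>\<close>

lemma continuous_map_of_Cnat_K:
  "Cnat_K sX sF k m V g \<Longrightarrow> continuous_map (subtopology (Xpow m) V) euclidean g"
  by (cases k) (auto simp: C1_K_def)

lemma Cnat_K_Suc_imp: "Cnat_K sX sF (Suc k) m V g \<Longrightarrow> Cnat_K sX sF k m V g"
  by (induction k arbitrary: m V g) (auto simp: C1_K_def)

lemma Cnat_K_SucD:
  assumes "Cnat_K sX sF (Suc k) m V g" and "r \<in> dom_d m V"
  shows "(diffq sX sF m g (fst_part m r) (snd_part m r) \<longlongrightarrow> dd sX sF m g r) (at 0)"
proof -
  have "fst_part m r \<in> V" and "snd_part m r \<in> topspace (Xpow m)"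
    using assms(2) by (auto simp: dom_d_def snd_part_eq_reindex reindex_in_topspace)
  then obtain l where "(diffq sX sF m g (fst_part m r) (snd_part m r) \<longlongrightarrow> l) (at 0)"
    using assms(1) by (auto simp: C1_K_def)
  then show ?thesis
    by (simp add: dd_def tendsto_Lim)
qed

lemma Cnat_K_cong:
  fixes sX :: "'k::real_normed_field \<Rightarrow> 'x::{ab_group_add,t2_space} \<Rightarrow> 'x"
  assumes X: "lcs sX"
  shows "openin (Xpow m) V \<Longrightarrow> (\<And>p. p \<in> V \<Longrightarrow> g p = g' p) \<Longrightarrow> Cnat_K sX sF k m V g
    \<Longrightarrow> Cnat_K sX sF k m V g'"
proof (induction k arbitrary: m V g g')
  case 0
  then show ?case
    by (auto intro: continuous_map_eq)
next
  case (Suc k)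
  have diffq_eq: "\<forall>\<^sub>F t in at 0. diffq sX sF m g p q t = diffq sX sF m g' p q t"
    if "p \<in> V" and "q \<in> topspace (Xpow m)" for p q
    using eventually_padd_pscale_in[OF X Suc.prems(1) that]
    by eventually_elim (simp add: diffq_def Suc.prems(2) that(1))
  have "dd sX sF m g r = dd sX sF m g' r" if "r \<in> dom_d m V" for r
    using that unfolding dd_def
    by (intro Lim_cong diffq_eq) (auto simp: dom_d_def snd_part_eq_reindex reindex_in_topspace)
  moreover have "Cnat_K sX sF k (2 * m) (dom_d m V) (dd sX sF m g)"
    using Suc.prems(3) by simp
  ultimately have "Cnat_K sX sF k (2 * m) (dom_d m V) (dd sX sF m g')"
    by (rule Suc.IH[OF openin_dom_d[OF Suc.prems(1)]])
  moreover have "continuous_map (subtopology (Xpow m) V) euclidean g'"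
    using continuous_map_of_Cnat_K[OF Suc.prems(3)] Suc.prems(2) by (auto intro: continuous_map_eq)
  moreover have "\<exists>l. (diffq sX sF m g' p q \<longlongrightarrow> l) (at 0)"
    if "p \<in> V" and "q \<in> topspace (Xpow m)" for p q
    using Suc.prems(3) that tendsto_cong[OF diffq_eq[OF that]] unfolding Cnat_K.simps C1_K_def by blast
  ultimately show ?case
    by (auto simp: C1_K_def continuous_map_of_Cnat_K)
qed

lemma Cnat_K_SucI:
  fixes sX :: "'k::real_normed_field \<Rightarrow> 'x::{ab_group_add,t2_space} \<Rightarrow> 'x"
  assumes X: "lcs sX" and V: "openin (Xpow m) V"
    and g: "continuous_map (subtopology (Xpow m) V) euclidean g"
    and lim: "\<And>r. r \<in> dom_d m V
      \<Longrightarrow> (diffq sX sF m g (fst_part m r) (snd_part m r) \<longlongrightarrow> G r) (at 0)"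
    and G: "Cnat_K sX sF k (2 * m) (dom_d m V) G"
  shows "Cnat_K sX sF (Suc k) m V g"
proof -
  have "dd sX sF m g r = G r" if "r \<in> dom_d m V" for r
    using lim[OF that] by (simp add: dd_def tendsto_Lim)
  then have "Cnat_K sX sF k (2 * m) (dom_d m V) (dd sX sF m g)"
    by (intro Cnat_K_cong[OF X openin_dom_d[OF V] _ G]) simp
  moreover have "\<exists>l. (diffq sX sF m g p q \<longlongrightarrow> l) (at 0)"
    if "p \<in> V" and "q \<in> topspace (Xpow m)" for p q
    using dom_d_split[OF that(1) openin_subset[OF V] that(2)] lim by metis
  ultimately show ?thesis
    using g by (auto simp: C1_K_def continuous_map_of_Cnat_K)
qed

lemma diffq_add:
  assumes "vector_space sF"
  shows "diffq sX sF m (\<lambda>p. g1 p + g2 p) p q t = diffq sX sF m g1 p q t + diffq sX sF m g2 p q t"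
proof -
  interpret vector_space sF by fact
  show ?thesis
    by (simp add: diffq_def diff_add_eq add_diff_eq flip: scale_right_distrib)
qed

lemma Cnat_K_add:
  fixes sX :: "'k::real_normed_field \<Rightarrow> 'x::{ab_group_add,t2_space} \<Rightarrow> 'x"
    and sF :: "'k \<Rightarrow> 'f::{ab_group_add,t2_space} \<Rightarrow> 'f"
  assumes X: "lcs sX" and F: "lcs sF"
  shows "openin (Xpow m) V \<Longrightarrow> Cnat_K sX sF k m V g1 \<Longrightarrow> Cnat_K sX sF k m V g2
    \<Longrightarrow> Cnat_K sX sF k m V (\<lambda>p. g1 p + g2 p)"
proof (induction k arbitrary: m V g1 g2)
  case 0
  then show ?case
    by (simp add: continuous_map_binop[OF lcs_continuous_add[OF F]])
next
  case (Suc k)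
  show ?case
  proof (rule Cnat_K_SucI[OF X Suc.prems(1)])
    show "continuous_map (subtopology (Xpow m) V) euclidean (\<lambda>p. g1 p + g2 p)"
      using Suc.prems(2,3)
      by (intro continuous_map_binop[OF lcs_continuous_add[OF F]] continuous_map_of_Cnat_K)
    show "(diffq sX sF m (\<lambda>p. g1 p + g2 p) (fst_part m r) (snd_part m r)
        \<longlongrightarrow> dd sX sF m g1 r + dd sX sF m g2 r) (at 0)" if "r \<in> dom_d m V" for r
      unfolding diffq_add[OF lcs_vector_space[OF F]]
      by (intro lcs_tendsto_add[OF F] Cnat_K_SucD[OF Suc.prems(2) that] Cnat_K_SucD[OF Suc.prems(3) that])
    show "Cnat_K sX sF k (2 * m) (dom_d m V) (\<lambda>r. dd sX sF m g1 r + dd sX sF m g2 r)"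
      using Suc.IH[OF openin_dom_d[OF Suc.prems(1)]] Suc.prems(2,3) by simp
  qed
qed

lemma Cnat_K_linear_compose:
  fixes sX :: "'k::real_normed_field \<Rightarrow> 'x::{ab_group_add,t2_space} \<Rightarrow> 'x"
    and L :: "'f::{ab_group_add,t2_space} \<Rightarrow> 'g::{ab_group_add,t2_space}"
  assumes X: "lcs sX" and L: "continuous_on UNIV L"
    and diff: "\<And>x y. L (x - y) = L x - L y" and scale: "\<And>c x. L (sF c x) = sG c (L x)"
  shows "openin (Xpow m) V \<Longrightarrow> Cnat_K sX sF k m V g \<Longrightarrow> Cnat_K sX sG k m V (\<lambda>p. L (g p))"
proof (induction k arbitrary: m V g)
  case 0
  then show ?case
    using continuous_map_compose[of _ euclidean g euclidean L] L by (simp add: o_def)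
next
  case (Suc k)
  show ?case
  proof (rule Cnat_K_SucI[OF X Suc.prems(1)])
    show "continuous_map (subtopology (Xpow m) V) euclidean (\<lambda>p. L (g p))"
      using continuous_map_compose[OF continuous_map_of_Cnat_K[OF Suc.prems(2)], of euclidean L] L
      by (simp add: o_def)
    have "diffq sX sG m (\<lambda>p. L (g p)) p q = (\<lambda>t. L (diffq sX sF m g p q t))" for p q
      by (simp add: fun_eq_iff diffq_def diff scale)
    then show "(diffq sX sG m (\<lambda>p. L (g p)) (fst_part m r) (snd_part m r)
        \<longlongrightarrow> L (dd sX sF m g r)) (at 0)" if "r \<in> dom_d m V" for r
      using continuous_on_tendsto_compose[OF L Cnat_K_SucD[OF Suc.prems(2) that]] by (simp add: o_def)
    show "Cnat_K sX sG k (2 * m) (dom_d m V) (\<lambda>r. L (dd sX sF m g r))"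
      using Suc.IH[OF openin_dom_d[OF Suc.prems(1)]] Suc.prems(2) by simp
  qed
qed

lemma diffq_reindex:
  assumes "\<And>i. i < m \<Longrightarrow> \<sigma> i < m'"
  shows "diffq sX sF m' (\<lambda>r. h (reindex m \<sigma> r)) p q = diffq sX sF m h (reindex m \<sigma> p) (reindex m \<sigma> q)"
proof -
  have "reindex m \<sigma> (padd m' p (pscale sX m' t q)) = padd m (reindex m \<sigma> p) (pscale sX m t (reindex m \<sigma> q))"
    for t
    using assms by (auto simp: fun_eq_iff reindex_def padd_def pscale_def)
  then show ?thesis
    by (intro ext) (simp add: diffq_def)
qed

lemma fst_part_reindex_pair:
  assumes "\<And>i. i < m \<Longrightarrow> \<sigma> i < m'"
  shows "fst_part m (reindex (2 * m) (\<lambda>i. if i < m then \<sigma> i else \<sigma> (i - m) + m') r)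
    = reindex m \<sigma> (fst_part m' r)"
  using assms by (auto simp: fun_eq_iff reindex_def fst_part_def)

lemma snd_part_reindex_pair:
  assumes "\<And>i. i < m \<Longrightarrow> \<sigma> i < m'"
  shows "snd_part m (reindex (2 * m) (\<lambda>i. if i < m then \<sigma> i else \<sigma> (i - m) + m') r)
    = reindex m \<sigma> (snd_part m' r)"
  using assms by (auto simp: fun_eq_iff reindex_def snd_part_def)

lemma Cnat_K_reindex:
  fixes sX :: "'k::real_normed_field \<Rightarrow> 'x::{ab_group_add,t2_space} \<Rightarrow> 'x"
    and h :: "(nat \<Rightarrow> 'x) \<Rightarrow> 'f::{ab_group_add,t2_space}"
  assumes X: "lcs sX"
  shows "(\<And>i. i < m \<Longrightarrow> \<sigma> i < m') \<Longrightarrow> openin (Xpow m') W \<Longrightarrow> reindex m \<sigma> ` W \<subseteq> V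
    \<Longrightarrow> Cnat_K sX sF k m V h \<Longrightarrow> Cnat_K sX sF k m' W (\<lambda>r. h (reindex m \<sigma> r))"
proof (induction k arbitrary: m m' \<sigma> V W h)
  case 0
  then show ?case
    using continuous_map_compose[OF continuous_map_reindex_subtopology[OF 0(1,3)]] by (simp add: o_def)
next
  case (Suc k)
  (* dd of h \<circ> reindex m \<sigma> is dd h \<circ> reindex (2 m) \<sigma>', with \<sigma>' acting as \<sigma> on both halves *)
  let ?\<sigma>' = "\<lambda>i. if i < m then \<sigma> i else \<sigma> (i - m) + m'"
  have \<sigma>': "?\<sigma>' i < 2 * m'" if "i < 2 * m" for i
    using Suc.prems(1)[of i] Suc.prems(1)[of "i - m"] that by auto
  note parts = fst_part_reindex_pair[OF Suc.prems(1)] snd_part_reindex_pair[OF Suc.prems(1)]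
  have dom: "reindex (2 * m) ?\<sigma>' ` dom_d m' W \<subseteq> dom_d m V"
  proof
    fix y assume "y \<in> reindex (2 * m) ?\<sigma>' ` dom_d m' W"
    then obtain r where r: "r \<in> dom_d m' W" and y: "y = reindex (2 * m) ?\<sigma>' r"
      by blast
    have "fst_part m y = reindex m \<sigma> (fst_part m' r)"
      unfolding y by (rule parts(1))
    with r Suc.prems(3) have "fst_part m y \<in> V"
      by (auto simp: dom_d_def)
    then show "y \<in> dom_d m V"
      unfolding dom_d_def y using reindex_in_topspace by blast
  qed
  show ?case
  proof (rule Cnat_K_SucI[OF X Suc.prems(2)])
    show "continuous_map (subtopology (Xpow m') W) euclidean (\<lambda>r. h (reindex m \<sigma> r))"
      using continuous_map_compose[OF continuous_map_reindex_subtopology[OF Suc.prems(1,3)]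
          continuous_map_of_Cnat_K[OF Suc.prems(4)]]
      by (simp add: o_def)
    show "(diffq sX sF m' (\<lambda>r. h (reindex m \<sigma> r)) (fst_part m' r) (snd_part m' r)
        \<longlongrightarrow> dd sX sF m h (reindex (2 * m) ?\<sigma>' r)) (at 0)" if "r \<in> dom_d m' W" for r
    proof -
      have "reindex (2 * m) ?\<sigma>' r \<in> dom_d m V"
        using dom that by blast
      from Cnat_K_SucD[OF Suc.prems(4) this] show ?thesis
        by (simp only: diffq_reindex[OF Suc.prems(1), where h = h] parts[symmetric])
    qed
    show "Cnat_K sX sF k (2 * m') (dom_d m' W) (\<lambda>r. dd sX sF m h (reindex (2 * m) ?\<sigma>' r))"
      using Suc.IH[OF \<sigma>' openin_dom_d[OF Suc.prems(2)] dom] Suc.prems(4) by simp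
  qed
qed

lemma Cnat_K_fst_part:
  fixes sX :: "'k::real_normed_field \<Rightarrow> 'x::{ab_group_add,t2_space} \<Rightarrow> 'x"
  assumes "lcs sX" and "openin (Xpow m) V" and "Cnat_K sX sF (Suc k) m V h"
  shows "Cnat_K sX sF k (2 * m) (dom_d m V) (\<lambda>r. h (fst_part m r))"
proof -
  have "reindex m (\<lambda>i. i) ` dom_d m V \<subseteq> V"
    by (auto simp: dom_d_def fst_part_eq_reindex)
  from Cnat_K_reindex[OF assms(1) _ openin_dom_d[OF assms(2)] this Cnat_K_Suc_imp[OF assms(3)]]
  show ?thesis
    unfolding fst_part_eq_reindex by simp
qed

lemma tendsto_padd_pscale_of_diffq:
  fixes s :: "'k::real_normed_field \<Rightarrow> 'a::{ab_group_add,t2_space} \<Rightarrow> 'a"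
  assumes s: "lcs s" and lim: "(diffq sX s m h p q \<longlongrightarrow> l) (at 0)"
  shows "((\<lambda>t. h (padd m p (pscale sX m t q))) \<longlongrightarrow> h p) (at 0)"
proof -
  interpret vector_space s using lcs_vector_space[OF s] .
  have "((\<lambda>t. h p + s t (diffq sX s m h p q t)) \<longlongrightarrow> h p + s 0 l) (at 0)"
    by (intro lcs_tendsto_add[OF s] lcs_tendsto_scale[OF s] tendsto_const tendsto_ident_at lim)
  moreover have "\<forall>\<^sub>F t in at 0. h p + s t (diffq sX s m h p q t) = h (padd m p (pscale sX m t q))"
    by (auto simp: eventually_at_filter diffq_def)
  ultimately show ?thesis
    by (simp add: tendsto_cong)
qed

section \<open>Sequential continuity\<close>

lemma seq_continuous2_tendsto:
  fixes x :: "'a::first_countable_topology"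
  assumes "seq_continuous2 \<beta>" and "(a \<longlongrightarrow> a0) (at x within S)" and "(b \<longlongrightarrow> b0) (at x within S)"
  shows "((\<lambda>t. \<beta> (a t) (b t)) \<longlongrightarrow> \<beta> a0 b0) (at x within S)"
  unfolding tendsto_at_iff_sequentially comp_def
proof (intro allI impI)
  fix X assume "\<forall>i. X i \<in> S - {x}" and "X \<longlonglongrightarrow> x"
  with assms(2,3) have "(\<lambda>i. (a (X i), b (X i))) \<longlonglongrightarrow> (a0, b0)"
    by (intro tendsto_Pair) (simp_all add: tendsto_at_iff_sequentially comp_def)
  with assms(1) show "(\<lambda>i. \<beta> (a (X i)) (b (X i))) \<longlonglongrightarrow> \<beta> a0 b0"
    unfolding seq_continuous2_def by force
qed

lemma continuous_map_from_metrizable_sequentially: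
  assumes Y: "metrizable_space Y"
    and seq: "\<And>\<sigma> l. range \<sigma> \<subseteq> topspace Y \<Longrightarrow> limitin Y \<sigma> l sequentially
      \<Longrightarrow> ((\<lambda>n. g (\<sigma> n)) \<longlongrightarrow> g l) sequentially"
  shows "continuous_map Y euclidean g"
proof -
  obtain M d where "Metric_space M d" and Y_eq: "Y = Metric_space.mtopology M d"
    using Y unfolding metrizable_space_def by blast
  interpret Metric_space M d by fact
  show ?thesis
    unfolding continuous_map_closedin
  proof (intro conjI allI impI)
    show "g \<in> topspace Y \<rightarrow> topspace euclidean"
      by simp
    fix C :: "'b set" assume "closedin euclidean C"
    then have C: "closed C"
      by simp
    show "closedin Y {x \<in> topspace Y. g x \<in> C}"
      unfolding Y_eq metric_closedin_iff_sequentially_closed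
    proof (intro conjI allI impI)
      show "{x \<in> topspace mtopology. g x \<in> C} \<subseteq> M"
        by auto
      fix \<sigma> l assume "range \<sigma> \<subseteq> {x \<in> topspace mtopology. g x \<in> C} \<and> limitin mtopology \<sigma> l sequentially"
      then have range: "range \<sigma> \<subseteq> {x \<in> topspace mtopology. g x \<in> C}" and l: "limitin mtopology \<sigma> l sequentially"
        by blast+
      have "range \<sigma> \<subseteq> topspace Y"
        using range by (auto simp: Y_eq)
      from seq[OF this] have lim: "((\<lambda>n. g (\<sigma> n)) \<longlongrightarrow> g l) sequentially"
        using l by (simp add: Y_eq)
      have "\<forall>\<^sub>F n in sequentially. g (\<sigma> n) \<in> C"
        using range by (intro always_eventually) blast
      from Lim_in_closed_set[OF C this trivial_limit_sequentially lim] have "g l \<in> C" .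
      with limitin_topspace[OF l] show "l \<in> {x \<in> topspace mtopology. g x \<in> C}"
        by simp
    qed
  qed
qed

lemma continuous_map_bilinear_metrizable:
  assumes Y: "metrizable_space Y" and seq: "seq_continuous2 \<beta>"
    and g1: "continuous_map Y euclidean g1" and g2: "continuous_map Y euclidean g2"
  shows "continuous_map Y euclidean (\<lambda>y. \<beta> (g1 y) (g2 y))"
proof (rule continuous_map_from_metrizable_sequentially[OF Y])
  fix \<sigma> l assume "limitin Y \<sigma> l sequentially"
  then have "(\<lambda>n. (g1 (\<sigma> n), g2 (\<sigma> n))) \<longlonglongrightarrow> (g1 l, g2 l)"
    using continuous_map_limit[OF g1] continuous_map_limit[OF g2] by (intro tendsto_Pair) (simp_all add: o_def)
  from seq[unfolded seq_continuous2_def, rule_format, OF this]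
  show "(\<lambda>n. \<beta> (g1 (\<sigma> n)) (g2 (\<sigma> n))) \<longlonglongrightarrow> \<beta> (g1 l) (g2 l)"
    by simp
qed

section \<open>Bilinear maps\<close>

locale bilinear_lcs =
  fixes s1 :: "'k::real_normed_field \<Rightarrow> 'e1::{ab_group_add,t2_space} \<Rightarrow> 'e1"
    and s2 :: "'k \<Rightarrow> 'e2::{ab_group_add,t2_space} \<Rightarrow> 'e2"
    and sF :: "'k \<Rightarrow> 'f::{ab_group_add,t2_space} \<Rightarrow> 'f"
    and \<beta> :: "'e1 \<Rightarrow> 'e2 \<Rightarrow> 'f"
  assumes E1: "lcs s1" and E2: "lcs s2" and F: "lcs sF"
    and bilinear: "bilinear_K s1 s2 sF \<beta>"
begin

lemma linear_left: "module_hom s1 sF (\<lambda>a. \<beta> a b)"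
  using bilinear unfolding bilinear_K_def module_hom_iff_linear by blast

lemma linear_right: "module_hom s2 sF (\<beta> a)"
  using bilinear unfolding bilinear_K_def module_hom_iff_linear by blast

lemma diffq_bilinear:
  "diffq sX sF m (\<lambda>p. \<beta> (h1 p) (h2 p)) p q t =
     \<beta> (diffq sX s1 m h1 p q t) (h2 (padd m p (pscale sX m t q))) + \<beta> (h1 p) (diffq sX s2 m h2 p q t)"
proof -
  interpret vector_space sF using lcs_vector_space[OF F] .
  define a where "a = h1 (padd m p (pscale sX m t q))"
  define b where "b = h2 (padd m p (pscale sX m t q))"
  have "\<beta> a b - \<beta> (h1 p) (h2 p) = \<beta> (a - h1 p) b + \<beta> (h1 p) (b - h2 p)"
    by (simp add: module_hom.diff[OF linear_left] module_hom.diff[OF linear_right])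
  then show ?thesis
    unfolding diffq_def a_def[symmetric] b_def[symmetric]
    by (simp add: module_hom.scale[OF linear_left] module_hom.scale[OF linear_right]
        flip: scale_right_distrib)
qed

lemma diffq_bilinear_tendsto:
  fixes sX :: "'k \<Rightarrow> 'x::plus \<Rightarrow> 'x"
  assumes "seq_continuous2 \<beta>"
    and lim1: "(diffq sX s1 m h1 p q \<longlongrightarrow> l1) (at 0)" and lim2: "(diffq sX s2 m h2 p q \<longlongrightarrow> l2) (at 0)"
  shows "(diffq sX sF m (\<lambda>p. \<beta> (h1 p) (h2 p)) p q \<longlongrightarrow> \<beta> l1 (h2 p) + \<beta> (h1 p) l2) (at 0)"
  unfolding diffq_bilinear
  by (intro lcs_tendsto_add[OF F] seq_continuous2_tendsto[OF assms(1)] lim1 lim2 tendsto_const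
      tendsto_padd_pscale_of_diffq[OF E2 lim2])

lemma Cnat_K_bilinear:
  fixes sX :: "'k \<Rightarrow> 'x::{ab_group_add,t2_space} \<Rightarrow> 'x"
  assumes X: "lcs sX" and seq: "seq_continuous2 \<beta>"
    and cont: "\<And>m V (g1 :: (nat \<Rightarrow> 'x) \<Rightarrow> 'e1) (g2 :: (nat \<Rightarrow> 'x) \<Rightarrow> 'e2). openin (Xpow m) V
      \<Longrightarrow> continuous_map (subtopology (Xpow m) V) euclidean g1
      \<Longrightarrow> continuous_map (subtopology (Xpow m) V) euclidean g2
      \<Longrightarrow> continuous_map (subtopology (Xpow m) V) euclidean (\<lambda>p. \<beta> (g1 p) (g2 p))"
  shows "openin (Xpow m) V \<Longrightarrow> Cnat_K sX s1 k m V h1 \<Longrightarrow> Cnat_K sX s2 k m V h2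
    \<Longrightarrow> Cnat_K sX sF k m V (\<lambda>p. \<beta> (h1 p) (h2 p))"
proof (induction k arbitrary: m V h1 h2)
  case 0
  then show ?case
    using cont by simp
next
  case (Suc k)
  have W: "openin (Xpow (2 * m)) (dom_d m V)"
    using openin_dom_d[OF Suc.prems(1)] .
  have d1: "Cnat_K sX s1 k (2 * m) (dom_d m V) (dd sX s1 m h1)"
    and d2: "Cnat_K sX s2 k (2 * m) (dom_d m V) (dd sX s2 m h2)"
    using Suc.prems(2,3) by simp_all
  show ?case
  proof (rule Cnat_K_SucI[OF X Suc.prems(1)])
    show "continuous_map (subtopology (Xpow m) V) euclidean (\<lambda>p. \<beta> (h1 p) (h2 p))"
      using cont[OF Suc.prems(1) continuous_map_of_Cnat_K[OF Suc.prems(2)]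
          continuous_map_of_Cnat_K[OF Suc.prems(3)]] .
    show "(diffq sX sF m (\<lambda>p. \<beta> (h1 p) (h2 p)) (fst_part m r) (snd_part m r)
        \<longlongrightarrow> \<beta> (dd sX s1 m h1 r) (h2 (fst_part m r)) + \<beta> (h1 (fst_part m r)) (dd sX s2 m h2 r)) (at 0)"
      if "r \<in> dom_d m V" for r
      using diffq_bilinear_tendsto[OF seq Cnat_K_SucD[OF Suc.prems(2) that] Cnat_K_SucD[OF Suc.prems(3) that]] .
    show "Cnat_K sX sF k (2 * m) (dom_d m V)
        (\<lambda>r. \<beta> (dd sX s1 m h1 r) (h2 (fst_part m r)) + \<beta> (h1 (fst_part m r)) (dd sX s2 m h2 r))"
      using Cnat_K_add[OF X F W Suc.IH[OF W d1 Cnat_K_fst_part[OF X Suc.prems(1,3)]]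
          Suc.IH[OF W Cnat_K_fst_part[OF X Suc.prems(1,2)] d2]] .
  qed
qed

lemma tendsto_hypocontinuous2:
  assumes hypo: "hypocontinuous2 \<beta> S" and K: "K \<in> S"
    and a: "(a \<longlongrightarrow> a0) F" and b: "(b \<longlongrightarrow> b0) F" and bK: "\<forall>\<^sub>F i in F. b i \<in> K"
  shows "((\<lambda>i. \<beta> (a i) (b i)) \<longlongrightarrow> \<beta> a0 b0) F"
proof -
  have diff: "((\<lambda>i. a i - a0) \<longlongrightarrow> 0) F"
    using lcs_tendsto_diff[OF E1 a tendsto_const[of a0]] by simp
  have small: "((\<lambda>i. \<beta> (a i - a0) (b i)) \<longlongrightarrow> 0) F"
  proof (rule topological_tendstoI)
    fix W :: "'f set" assume "open W" and "0 \<in> W"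
    then obtain V where V: "open V" "0 \<in> V" and VK: "\<forall>x\<in>V. \<forall>y\<in>K. \<beta> x y \<in> W"
      using hypo K unfolding hypocontinuous2_def by blast
    from topological_tendstoD[OF diff V] bK
    show "\<forall>\<^sub>F i in F. \<beta> (a i - a0) (b i) \<in> W"
      by eventually_elim (use VK in blast)
  qed
  have "continuous_on UNIV (\<beta> a0)"
    using hypo unfolding hypocontinuous2_def by blast
  then have "((\<lambda>i. \<beta> a0 (b i)) \<longlongrightarrow> \<beta> a0 b0) F"
    by (rule continuous_on_tendsto_compose[OF _ b]) simp_all
  from lcs_tendsto_add[OF F small this] show ?thesis
    by (simp flip: module_hom.add[OF linear_left])
qed

lemma seq_continuous2_of_hypocontinuous2:
  assumes hypo: "hypocontinuous2 \<beta> S" and compact: "\<forall>K. compact K \<longrightarrow> K \<in> S"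
  shows "seq_continuous2 \<beta>"
  unfolding seq_continuous2_def
proof (intro allI impI)
  fix z :: "nat \<Rightarrow> 'e1 \<times> 'e2" and p assume z: "z \<longlonglongrightarrow> p"
  have "compactin euclidean (insert (snd p) (range (\<lambda>k. snd (z k))))"
    using tendsto_snd[OF z] by (intro compactin_sequence_with_limit) auto
  with compact have "insert (snd p) (range (\<lambda>k. snd (z k))) \<in> S"
    by simp
  from tendsto_hypocontinuous2[OF hypo this tendsto_fst[OF z] tendsto_snd[OF z]]
  show "(\<lambda>k. \<beta> (fst (z k)) (snd (z k))) \<longlonglongrightarrow> \<beta> (fst p) (snd p)"
    by simp
qed

lemma continuous_on_hypocontinuous2:
  assumes "hypocontinuous2 \<beta> S" and "K \<in> S"
  shows "continuous_on (UNIV \<times> K) (\<lambda>z. \<beta> (fst z) (snd z))"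
  unfolding continuous_on_def
proof
  fix z :: "'e1 \<times> 'e2" assume "z \<in> UNIV \<times> K"
  have "\<forall>\<^sub>F x in at z within UNIV \<times> K. snd x \<in> K"
    by (auto simp: eventually_at_filter mem_Times_iff)
  then show "((\<lambda>z. \<beta> (fst z) (snd z)) \<longlongrightarrow> \<beta> (fst z) (snd z)) (at z within UNIV \<times> K)"
    by (intro tendsto_hypocontinuous2[OF assms] tendsto_fst tendsto_snd tendsto_ident_at)
qed

lemma continuous_map_bilinear_k_space:
  assumes Y: "k_space Y" and hypo: "hypocontinuous2 \<beta> S" and compact: "\<forall>K. compact K \<longrightarrow> K \<in> S"
    and g1: "continuous_map Y euclidean g1" and g2: "continuous_map Y euclidean g2"
  shows "continuous_map Y euclidean (\<lambda>y. \<beta> (g1 y) (g2 y))"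
proof (rule continuous_map_from_k_space[OF Y])
  fix C assume C: "compactin Y C"
  have "compactin euclidean (g2 ` C)"
    by (rule image_compactin[OF C g2])
  with compact have "g2 ` C \<in> S"
    by simp
  from continuous_on_hypocontinuous2[OF hypo this]
  have \<beta>: "continuous_map (subtopology euclidean (UNIV \<times> g2 ` C)) euclidean (\<lambda>z. \<beta> (fst z) (snd z))"
    by simp
  have "continuous_map (subtopology Y C) (subtopology euclidean (UNIV \<times> g2 ` C)) (\<lambda>y. (g1 y, g2 y))"
    using continuous_map_pairedI[OF continuous_map_from_subtopology[OF g1] continuous_map_from_subtopology[OF g2]]
    by (intro continuous_map_into_subtopology) auto
  from continuous_map_compose[OF this \<beta>]
  show "continuous_map (subtopology Y C) euclidean (\<lambda>y. \<beta> (g1 y) (g2 y))"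
    by (simp add: o_def)
qed

lemma continuous_map_bilinear:
  assumes "(metrizable_space Y \<and> seq_continuous2 \<beta>)
      \<or> (k_space Y \<and> (\<exists>S. (\<forall>K. compact K \<longrightarrow> K \<in> S) \<and> hypocontinuous2 \<beta> S))"
    and "continuous_map Y euclidean g1" and "continuous_map Y euclidean g2"
  shows "continuous_map Y euclidean (\<lambda>y. \<beta> (g1 y) (g2 y))"
  using assms(1)
proof (elim disjE conjE exE)
  assume "metrizable_space Y" and "seq_continuous2 \<beta>"
  then show ?thesis
    using continuous_map_bilinear_metrizable assms(2,3) by blast
next
  fix S assume "k_space Y" and "\<forall>K. compact K \<longrightarrow> K \<in> S" and "hypocontinuous2 \<beta> S"
  then show ?thesis
    using continuous_map_bilinear_k_space assms(2,3) by blast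
qed

lemma continuous_on_bilinear_compose:
  fixes f :: "'t::topological_space \<Rightarrow> 'e1 \<times> 'e2"
  assumes f: "continuous_on UNIV f"
    and condition: "(metrizable_space (euclidean :: 't topology) \<and> seq_continuous2 \<beta>)
      \<or> (k_inf_space (euclidean :: 't topology) \<and> (\<exists>S. (\<forall>K. compact K \<longrightarrow> K \<in> S) \<and> hypocontinuous2 \<beta> S))"
  shows "continuous_on UNIV (\<lambda>x. \<beta> (fst (f x)) (snd (f x)))"
proof -
  have "continuous_map euclidean euclidean (\<lambda>x. \<beta> (fst (f x)) (snd (f x)))"
  proof (rule continuous_map_bilinear)
    show "(metrizable_space (euclidean :: 't topology) \<and> seq_continuous2 \<beta>)
      \<or> (k_space (euclidean :: 't topology) \<and> (\<exists>S. (\<forall>K. compact K \<longrightarrow> K \<in> S) \<and> hypocontinuous2 \<beta> S))"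
      using condition k_inf_space_imp_k_space by blast
    show "continuous_map euclidean euclidean (\<lambda>x. fst (f x))"
      and "continuous_map euclidean euclidean (\<lambda>x. snd (f x))"
      using f by (simp_all add: continuous_on_fst continuous_on_snd)
  qed
  then show ?thesis
    by simp
qed

lemma Cn_K_bilinear_compose:
  fixes sX :: "'k \<Rightarrow> 'x::{ab_group_add,t2_space} \<Rightarrow> 'x"
  assumes X: "lcs sX"
    and condition: "(metrizable_space (euclidean :: 'x topology) \<and> seq_continuous2 \<beta>)
      \<or> (k_inf_space (euclidean :: 'x topology) \<and> (\<exists>S. (\<forall>K. compact K \<longrightarrow> K \<in> S) \<and> hypocontinuous2 \<beta> S))"
    and f: "Cn_K sX (prod_scale s1 s2) n U f"
  shows "Cn_K sX sF n U (\<lambda>x. \<beta> (fst (f x)) (snd (f x)))"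
proof -
  have seq: "seq_continuous2 \<beta>"
    using condition seq_continuous2_of_hypocontinuous2 by blast
  have cont: "continuous_map (subtopology (Xpow m) V) euclidean (\<lambda>p. \<beta> (g1 p) (g2 p))"
    if V: "openin (Xpow m) V" and "continuous_map (subtopology (Xpow m) V) euclidean g1"
      and "continuous_map (subtopology (Xpow m) V) euclidean g2"
    for m V and g1 :: "(nat \<Rightarrow> 'x) \<Rightarrow> 'e1" and g2 :: "(nat \<Rightarrow> 'x) \<Rightarrow> 'e2"
  proof (rule continuous_map_bilinear[OF _ that(2,3)])
    show "(metrizable_space (subtopology (Xpow m) V) \<and> seq_continuous2 \<beta>)
      \<or> (k_space (subtopology (Xpow m) V) \<and> (\<exists>S. (\<forall>K. compact K \<longrightarrow> K \<in> S) \<and> hypocontinuous2 \<beta> S))"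
      using condition metrizable_space_subtopology[OF metrizable_space_Xpow] k_space_openin_Xpow[OF _ V]
      by blast
  qed
  have U: "openin (Xpow 1) (emb1 U :: (nat \<Rightarrow> 'x) set)"
    using f openin_emb1 unfolding Cn_K_def by blast
  have "Cnat_K sX sF k 1 (emb1 U) (\<lambda>p. \<beta> (fst (f (p 0))) (snd (f (p 0))))"
    if "Cnat_K sX (prod_scale s1 s2) k 1 (emb1 U) (\<lambda>p. f (p 0))" for k
  proof (rule Cnat_K_bilinear[OF X seq cont U])
    show "Cnat_K sX s1 k 1 (emb1 U) (\<lambda>p. fst (f (p 0)))"
      by (rule Cnat_K_linear_compose[OF X _ _ _ U that]) (simp_all add: prod_scale_def continuous_on_fst)
    show "Cnat_K sX s2 k 1 (emb1 U) (\<lambda>p. snd (f (p 0)))"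
      by (rule Cnat_K_linear_compose[OF X _ _ _ U that]) (simp_all add: prod_scale_def continuous_on_snd)
  qed
  with f show ?thesis
    by (cases n) (simp_all add: Cn_K_def)
qed

end

theorem theorem2p5:
  fixes s1 :: "'k::real_normed_field \<Rightarrow> 'e1::{ab_group_add,t2_space} \<Rightarrow> 'e1"
    and s2 :: "'k \<Rightarrow> 'e2::{ab_group_add,t2_space} \<Rightarrow> 'e2"
    and sF :: "'k \<Rightarrow> 'f::{ab_group_add,t2_space} \<Rightarrow> 'f"
    and \<beta> :: "'e1 \<Rightarrow> 'e2 \<Rightarrow> 'f"
  assumes E1: "lcs s1" and E2: "lcs s2" and F: "lcs sF"
    and bil: "bilinear_K s1 s2 sF \<beta>"
  shows
    \<comment> \<open>case n = 0: U = X an arbitrary topological space, f continuous\<close>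
    "(\<forall>f :: 't::topological_space \<Rightarrow> 'e1 \<times> 'e2.
        continuous_on UNIV f
        \<and> ((metrizable_space (euclidean :: 't topology) \<and> seq_continuous2 \<beta>)
           \<or> (k_inf_space (euclidean :: 't topology)
              \<and> (\<exists>S. (\<forall>M\<in>S. bounded_K s2 M) \<and> (\<forall>K. compact K \<longrightarrow> K \<in> S)
                     \<and> hypocontinuous2 \<beta> S)))
        \<longrightarrow> continuous_on UNIV (\<lambda>x. \<beta> (fst (f x)) (snd (f x))))
     \<and>
     \<comment> \<open>case n \<ge> 1: X locally convex, U \<subseteq> X open, f of class C^n_K\<close>
     (\<forall>(n::enat) (sX :: 'k \<Rightarrow> 'x::{ab_group_add,t2_space} \<Rightarrow> 'x) (U :: 'x set) (f :: 'x \<Rightarrow> 'e1 \<times> 'e2).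
        1 \<le> n \<and> lcs sX \<and> open U \<and> Cn_K sX (prod_scale s1 s2) n U f
        \<and> ((metrizable_space (euclidean :: 'x topology) \<and> seq_continuous2 \<beta>)
           \<or> (k_inf_space (euclidean :: 'x topology)
              \<and> (\<exists>S. (\<forall>M\<in>S. bounded_K s2 M) \<and> (\<forall>K. compact K \<longrightarrow> K \<in> S)
                     \<and> hypocontinuous2 \<beta> S)))
        \<longrightarrow> Cn_K sX sF n U (\<lambda>x. \<beta> (fst (f x)) (snd (f x))))"
proof -
  interpret bilinear_lcs s1 s2 sF \<beta>
    using E1 E2 F bil by unfold_locales
  show ?thesis
    by (intro conjI allI impI; elim conjE)
       (blast intro: continuous_on_bilinear_compose Cn_K_bilinear_compose)+
qed

end
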